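(* For a compact Hausdorff space $(X,\tau)$ the following are equivalent: (1) $X$ has the property $\textsf{S}_1(\mathcal{O},\mathcal{O})$; (2) TWO has a winning strategy in the game ${\sf G}_1(\mathcal{O},\mathcal{O})$.
   Context: $\mathcal{O}$: open covers of $X$. $\textsf{S}_1(\mathcal{O},\mathcal{O})$: for every sequence $(\mathcal{U}_n)$ of open covers there are $U_n\in\mathcal{U}_n$ with $\{U_n:n\in\mathbb{N}\}$ covering $X$. Game ${\sf G}_1(\mathcal{O},\mathcal{O})$: in inning $n\in\mathbb{N}$ ONE chooses an open cover $O_n$ of $X$, TWO responds with $T_n\in O_n$; TWO wins if $\{T_n:n\in\mathbb{N}\}$ covers $X$, otherwise ONE wins. *)

theory Defs
  imports "HOL-Analysis.Analysis"
begin

definition open_cover :: "'a topology \<Rightarrow> 'a set set \<Rightarrow> bool" where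
  "open_cover X \<U> \<longleftrightarrow> (\<forall>U\<in>\<U>. openin X U) \<and> \<Union>\<U> = topspace X"

definition S1_OO :: "'a topology \<Rightarrow> bool" where
  "S1_OO X \<longleftrightarrow>
     (\<forall>\<U> :: nat \<Rightarrow> 'a set set. (\<forall>n. open_cover X (\<U> n)) \<longrightarrow>
        (\<exists>U :: nat \<Rightarrow> 'a set. (\<forall>n. U n \<in> \<U> n) \<and> topspace X \<subseteq> (\<Union>n. U n)))"

text \<open>A strategy for TWO in G_1(O,O): given the finite list of covers played by ONE so far
  (the last one being the current move), TWO chooses a member of the current cover.\<close>
definition TWO_strategy_G1_OO :: "'a topology \<Rightarrow> ('a set set list \<Rightarrow> 'a set) \<Rightarrow> bool" where
  "TWO_strategy_G1_OO X \<sigma> \<longleftrightarrow>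
     (\<forall>s C0. (\<forall>C\<in>set s. open_cover X C) \<longrightarrow> open_cover X C0 \<longrightarrow> \<sigma> (s @ [C0]) \<in> C0)"

definition TWO_winning_G1_OO :: "'a topology \<Rightarrow> ('a set set list \<Rightarrow> 'a set) \<Rightarrow> bool" where
  "TWO_winning_G1_OO X \<sigma> \<longleftrightarrow> TWO_strategy_G1_OO X \<sigma> \<and>
     (\<forall>\<O> :: nat \<Rightarrow> 'a set set. (\<forall>n. open_cover X (\<O> n)) \<longrightarrow>
        topspace X \<subseteq> (\<Union>n. \<sigma> (map \<O> [0..<Suc n])))"

definition TWO_has_winning_strategy_G1_OO :: "'a topology \<Rightarrow> bool" where
  "TWO_has_winning_strategy_G1_OO X \<longleftrightarrow> (\<exists>\<sigma>. TWO_winning_G1_OO X \<sigma>)"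

end

theory Submission
  imports Defs
begin

text \<open>K is G1-coverable when TWO can cover K in finitely many innings whatever ONE plays:
  K is empty, or against every cover TWO can pick a member leaving a G1-coverable rest; this
  well-founded recursion is a strategy. If the whole space is not G1-coverable, compactness shows
  that the points without a G1-coverable neighbourhood form a nonempty set without isolated
  points, and in a compact Hausdorff space such a set carries a Cantor scheme of open sets with
  disjoint closures. In inning n ONE then plays the cover by the complements of the closures of
  one child of each node of level n: the selected sets single out a branch, and the nonempty
  intersection of the closures along it is missed by every selected set.\<close>

inductive G1_coverable :: "'a topology \<Rightarrow> 'a set \<Rightarrow> bool" for X where
  G1_coverable_empty: "G1_coverable X {}"
| G1_coverable_step: "(\<And>C. open_cover X C \<Longrightarrow> \<exists>U\<in>C. G1_coverable X (K - U)) \<Longrightarrow> G1_coverable X K"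

lemma G1_coverable_subset: "G1_coverable X K \<Longrightarrow> L \<subseteq> K \<Longrightarrow> G1_coverable X L"
proof (induction K arbitrary: L rule: G1_coverable.induct)
  case G1_coverable_empty
  then show ?case by (simp add: G1_coverable.G1_coverable_empty)
next
  case (G1_coverable_step K)
  show ?case
  proof (rule G1_coverable.G1_coverable_step)
    fix C assume "open_cover X C"
    with G1_coverable_step.IH obtain U
      where "U \<in> C" "\<And>L'. L' \<subseteq> K - U \<Longrightarrow> G1_coverable X L'"
      by blast
    with G1_coverable_step.prems show "\<exists>U\<in>C. G1_coverable X (L - U)" by blast
  qed
qed

lemma G1_coverable_Un: "G1_coverable X K \<Longrightarrow> G1_coverable X L \<Longrightarrow> G1_coverable X (K \<union> L)"
proof (induction K rule: G1_coverable.induct)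
  case G1_coverable_empty
  then show ?case by simp
next
  case (G1_coverable_step K)
  show ?case
  proof (rule G1_coverable.G1_coverable_step)
    fix C assume "open_cover X C"
    with G1_coverable_step.IH G1_coverable_step.prems obtain U
      where "U \<in> C" "G1_coverable X ((K - U) \<union> L)"
      by blast
    then show "\<exists>U\<in>C. G1_coverable X (K \<union> L - U)" by (blast intro: G1_coverable_subset)
  qed
qed

lemma G1_coverable_Union: "finite \<F> \<Longrightarrow> (\<And>K. K \<in> \<F> \<Longrightarrow> G1_coverable X K) \<Longrightarrow> G1_coverable X (\<Union>\<F>)"
  by (induction \<F> rule: finite_induct) (auto intro: G1_coverable_Un G1_coverable_empty)

lemma G1_coverable_compactin:
  assumes "compactin X S" and "\<And>x. x \<in> S \<Longrightarrow> \<exists>N. openin X N \<and> x \<in> N \<and> G1_coverable X N"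
  shows "G1_coverable X S"
proof -
  have "S \<subseteq> \<Union>{N. openin X N \<and> G1_coverable X N}" using assms(2) by blast
  then obtain \<F> where \<F>: "finite \<F>" "\<F> \<subseteq> {N. openin X N \<and> G1_coverable X N}" "S \<subseteq> \<Union>\<F>"
    using compactinD[OF assms(1)] by (metis (no_types, lifting) mem_Collect_eq)
  then have "G1_coverable X (\<Union>\<F>)" by (intro G1_coverable_Union) auto
  then show ?thesis using \<F>(3) by (rule G1_coverable_subset)
qed

definition TWO_covers_G1 :: "'a topology \<Rightarrow> 'a set \<Rightarrow> ('a set set list \<Rightarrow> 'a set) \<Rightarrow> bool" where
  "TWO_covers_G1 X K \<sigma> \<longleftrightarrow> TWO_strategy_G1_OO X \<sigma> \<and>
     (\<forall>\<O>. (\<forall>n. open_cover X (\<O> n)) \<longrightarrow> K \<subseteq> (\<Union>n. \<sigma> (map \<O> [0..<Suc n])))"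

lemma TWO_winning_G1_OO_iff_TWO_covers_G1:
  "TWO_winning_G1_OO X \<sigma> \<longleftrightarrow> TWO_covers_G1 X (topspace X) \<sigma>"
  unfolding TWO_winning_G1_OO_def TWO_covers_G1_def ..

lemma TWO_covers_G1D:
  "TWO_covers_G1 X K \<sigma> \<Longrightarrow> (\<And>n. open_cover X (\<O> n)) \<Longrightarrow> K \<subseteq> (\<Union>n. \<sigma> (map \<O> [0..<Suc n]))"
  unfolding TWO_covers_G1_def by blast

lemma TWO_strategy_G1_OO_exists:
  assumes "topspace X \<noteq> {}"
  shows "\<exists>\<sigma>. TWO_strategy_G1_OO X \<sigma>"
proof
  show "TWO_strategy_G1_OO X (\<lambda>s. SOME U. U \<in> last s)"
    unfolding TWO_strategy_G1_OO_def
  proof (intro allI impI)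
    fix s and C :: "'a set set" assume "open_cover X C"
    with assms have "C \<noteq> {}" unfolding open_cover_def by (metis Union_empty)
    then show "(SOME U. U \<in> last (s @ [C])) \<in> C" by (simp add: some_in_eq)
  qed
qed

text \<open>After the first inning TWO drops ONE's first cover from the history and follows the
  strategy for what is left of K.\<close>

lemma G1_coverable_imp_TWO_covers_G1:
  assumes "topspace X \<noteq> {}" and "G1_coverable X K"
  shows "\<exists>\<sigma>. TWO_covers_G1 X K \<sigma>"
  using assms(2)
proof (induction K rule: G1_coverable.induct)
  case G1_coverable_empty
  then show ?case using TWO_strategy_G1_OO_exists[OF assms(1)] by (simp add: TWO_covers_G1_def)
next
  case (G1_coverable_step K)
  then have "\<forall>C. \<exists>U. open_cover X C \<longrightarrow> U \<in> C \<and> (\<exists>\<tau>. TWO_covers_G1 X (K - U) \<tau>)"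
    by blast
  then obtain first where "\<forall>C. open_cover X C \<longrightarrow> first C \<in> C \<and> (\<exists>\<tau>. TWO_covers_G1 X (K - first C) \<tau>)"
    by (rule choice[THEN exE])
  then obtain rest where first: "\<And>C. open_cover X C \<Longrightarrow> first C \<in> C"
    and rest: "\<And>C. open_cover X C \<Longrightarrow> TWO_covers_G1 X (K - first C) (rest C)"
    by metis
  define \<sigma> where "\<sigma> s = (if length s \<le> 1 then first (hd s) else rest (hd s) (tl s))" for s
  have strategy: "TWO_strategy_G1_OO X \<sigma>"
    unfolding TWO_strategy_G1_OO_def
  proof (intro allI impI)
    fix s C assume s: "\<forall>C\<in>set s. open_cover X C" and C: "open_cover X C"
    show "\<sigma> (s @ [C]) \<in> C"
    proof (cases s)
      case Nil
      then show ?thesis using first[OF C] by (simp add: \<sigma>_def)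
    next
      case (Cons C0 s')
      with s rest[of C0] have "rest C0 (s' @ [C]) \<in> C"
        using C unfolding TWO_covers_G1_def TWO_strategy_G1_OO_def by simp
      then show ?thesis using Cons by (simp add: \<sigma>_def)
    qed
  qed
  have "K \<subseteq> (\<Union>n. \<sigma> (map \<O> [0..<Suc n]))" if \<O>: "\<And>n. open_cover X (\<O> n)" for \<O>
  proof -
    have "K - first (\<O> 0) \<subseteq> (\<Union>n. rest (\<O> 0) (map (\<lambda>i. \<O> (Suc i)) [0..<Suc n]))"
      using TWO_covers_G1D[OF rest[OF \<O>[of 0]], of "\<lambda>i. \<O> (Suc i)"] \<O> by blast
    also have "\<dots> = (\<Union>n. \<sigma> (map \<O> [0..<Suc (Suc n)]))"
      by (simp add: \<sigma>_def map_upt_Suc del: upt_Suc)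
    finally have "K - first (\<O> 0) \<subseteq> (\<Union>n. \<sigma> (map \<O> [0..<Suc (Suc n)]))" .
    moreover have "first (\<O> 0) = \<sigma> (map \<O> [0..<Suc 0])" by (simp add: \<sigma>_def)
    ultimately show ?thesis by blast
  qed
  with strategy show ?case unfolding TWO_covers_G1_def by blast
qed

lemma TWO_winning_G1_OO_imp_S1_OO:
  assumes "TWO_winning_G1_OO X \<sigma>"
  shows "S1_OO X"
  unfolding S1_OO_def
proof (intro allI impI)
  fix \<U> :: "nat \<Rightarrow> 'a set set" assume \<U>: "\<forall>n. open_cover X (\<U> n)"
  have "\<sigma> (map \<U> [0..<n] @ [\<U> n]) \<in> \<U> n" for n
    using assms \<U> unfolding TWO_winning_G1_OO_def TWO_strategy_G1_OO_def by simp
  moreover have "topspace X \<subseteq> (\<Union>n. \<sigma> (map \<U> [0..<Suc n]))"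
    using assms \<U> unfolding TWO_winning_G1_OO_def by blast
  ultimately show "\<exists>U. (\<forall>n. U n \<in> \<U> n) \<and> topspace X \<subseteq> (\<Union>n. U n)"
    by (intro exI[of _ "\<lambda>n. \<sigma> (map \<U> [0..<Suc n])"]) simp
qed

lemma S1_OO_imp_topspace_nonempty:
  assumes "S1_OO X"
  shows "topspace X \<noteq> {}"
proof
  assume "topspace X = {}"
  then have "open_cover X {}" by (simp add: open_cover_def)
  with spec[OF assms[unfolded S1_OO_def], of "\<lambda>_. {}"] show False by simp
qed

lemma regular_space_closure_of_subset_open:
  assumes "regular_space X" "openin X W" "x \<in> W"
  obtains U where "openin X U" "x \<in> U" "X closure_of U \<subseteq> W"
proof -
  have "closedin X (topspace X - W)" "x \<in> topspace X - (topspace X - W)"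
    using assms(2,3) openin_subset by blast+
  with assms(1) obtain U where "openin X U" "x \<in> U" "disjnt (topspace X - W) (X closure_of U)"
    unfolding regular_space by blast
  with closure_of_subset_topspace[of X U] show thesis
    using that unfolding disjnt_def by blast
qed

definition splits_into :: "'a topology \<Rightarrow> 'a set \<Rightarrow> 'a set \<Rightarrow> 'a set \<Rightarrow> bool" where
  "splits_into X W A B \<longleftrightarrow>
     X closure_of A \<subseteq> W \<and> X closure_of B \<subseteq> W \<and> disjnt (X closure_of A) (X closure_of B)"

lemma dense_in_itself_split_open:
  assumes "Hausdorff_space X" "regular_space X" "P \<subseteq> X derived_set_of P"
    and "openin X W" "W \<inter> P \<noteq> {}"
  shows "\<exists>A B. openin X A \<and> openin X B \<and> A \<inter> P \<noteq> {} \<and> B \<inter> P \<noteq> {} \<and> splits_into X W A B"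
proof -
  obtain x where x: "x \<in> W" "x \<in> P" using assms(5) by blast
  with assms(3) have "x \<in> X derived_set_of P" by blast
  with x(1) assms(4) obtain y where y: "y \<in> P" "y \<in> W" "y \<noteq> x"
    unfolding in_derived_set_of by blast
  have "x \<in> topspace X" "y \<in> topspace X"
    using x(1) y(2) openin_subset[OF assms(4)] by blast+
  with y(3) assms(1) obtain G H where GH: "openin X G" "openin X H" "x \<in> G" "y \<in> H" "disjnt G H"
    unfolding Hausdorff_space_def by blast
  obtain A where A: "openin X A" "x \<in> A" "X closure_of A \<subseteq> W \<inter> G"
    using regular_space_closure_of_subset_open[OF assms(2), of "W \<inter> G" x] GH assms(4) x by blast
  obtain B where B: "openin X B" "y \<in> B" "X closure_of B \<subseteq> W \<inter> H"
    using regular_space_closure_of_subset_open[OF assms(2), of "W \<inter> H" y] GH assms(4) y by blast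
  have "splits_into X W A B"
    using A(3) B(3) GH(5) unfolding splits_into_def disjnt_def by blast
  moreover have "A \<inter> P \<noteq> {}" "B \<inter> P \<noteq> {}" using A(2) B(2) x y by blast+
  ultimately show ?thesis using A(1) B(1) by blast
qed

text \<open>A Cantor scheme is indexed by finite binary words, the newest letter in front.\<close>

definition Cantor_scheme :: "'a topology \<Rightarrow> (bool list \<Rightarrow> 'a set) \<Rightarrow> bool" where
  "Cantor_scheme X T \<longleftrightarrow>
     (\<forall>s. openin X (T s) \<and> T s \<noteq> {} \<and> splits_into X (T s) (T (True # s)) (T (False # s)))"

lemma dense_in_itself_imp_Cantor_scheme:
  assumes "Hausdorff_space X" "regular_space X" "P \<subseteq> X derived_set_of P" "P \<noteq> {}"
  shows "\<exists>T. Cantor_scheme X T"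
proof -
  define meets_P where "meets_P W \<longleftrightarrow> openin X W \<and> W \<inter> P \<noteq> {}" for W
  have AB_ex: "\<exists>AB. meets_P (fst AB) \<and> meets_P (snd AB) \<and> splits_into X W (fst AB) (snd AB)"
    if "meets_P W" for W
  proof -
    have "openin X W" "W \<inter> P \<noteq> {}" using that unfolding meets_P_def by auto
    from dense_in_itself_split_open[OF assms(1-3) this] obtain A B
      where "openin X A" "openin X B" "A \<inter> P \<noteq> {}" "B \<inter> P \<noteq> {}" "splits_into X W A B"
      by blast
    then show ?thesis by (intro exI[where x = "(A, B)"]) (simp add: meets_P_def)
  qed
  define AB where "AB W = (SOME AB. meets_P (fst AB) \<and> meets_P (snd AB) \<and>
    splits_into X W (fst AB) (snd AB))" for W
  have AB: "meets_P (fst (AB W)) \<and> meets_P (snd (AB W)) \<and> splits_into X W (fst (AB W)) (snd (AB W))"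
    if "meets_P W" for W
    unfolding AB_def by (rule someI_ex[OF AB_ex[OF that]])
  define T where "T = rec_list (topspace X) (\<lambda>b _ W. if b then fst (AB W) else snd (AB W))"
  have T_Nil: "T [] = topspace X" and T_Cons: "T (b # s) = (if b then fst (AB (T s)) else snd (AB (T s)))"
    for b s by (simp_all add: T_def)
  have T_meets_P: "meets_P (T s)" for s
  proof (induction s)
    case Nil
    have "P \<subseteq> topspace X" using assms(3) derived_set_of_subset_topspace by (rule order_trans)
    with assms(4) show ?case by (auto simp: meets_P_def T_Nil)
  next
    case (Cons b s)
    then show ?case using AB[OF Cons.IH] by (simp add: T_Cons)
  qed
  have "Cantor_scheme X T"
    unfolding Cantor_scheme_def
  proof
    fix s
    show "openin X (T s) \<and> T s \<noteq> {} \<and> splits_into X (T s) (T (True # s)) (T (False # s))"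
      using T_meets_P[of s] AB[OF T_meets_P[of s]] by (auto simp: meets_P_def T_Cons)
  qed
  then show ?thesis by blast
qed

lemma Cantor_scheme_closure_of_Cons_subset:
  "Cantor_scheme X T \<Longrightarrow> X closure_of T (b # s) \<subseteq> T s"
  unfolding Cantor_scheme_def splits_into_def by (cases b) auto

lemma Cantor_scheme_disjnt_siblings:
  "Cantor_scheme X T \<Longrightarrow> disjnt (X closure_of T (True # s)) (X closure_of T (False # s))"
  unfolding Cantor_scheme_def splits_into_def by blast

definition Cantor_cover :: "'a topology \<Rightarrow> (bool list \<Rightarrow> 'a set) \<Rightarrow> nat \<Rightarrow> 'a set set" where
  "Cantor_cover X T n =
     range (\<lambda>f. topspace X - (\<Union>s\<in>{s. length s = n}. X closure_of T (f s # s)))"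

lemma open_cover_Cantor_cover:
  assumes "Cantor_scheme X T"
  shows "open_cover X (Cantor_cover X T n)"
  unfolding open_cover_def
proof
  have "closedin X (\<Union>s\<in>{s. length s = n}. X closure_of T (f s # s))" for f
    using finite_lists_length_eq[of "UNIV :: bool set" n] by (intro closedin_Union) auto
  then show "\<forall>U\<in>Cantor_cover X T n. openin X U" unfolding Cantor_cover_def by blast
  show "\<Union>(Cantor_cover X T n) = topspace X"
  proof
    show "\<Union>(Cantor_cover X T n) \<subseteq> topspace X" unfolding Cantor_cover_def by blast
    show "topspace X \<subseteq> \<Union>(Cantor_cover X T n)"
    proof
      fix x assume x: "x \<in> topspace X"
      define f where "f s = (x \<notin> X closure_of T (True # s))" for s
      have "x \<notin> X closure_of T (f s # s)" for s
        using Cantor_scheme_disjnt_siblings[OF assms, of s] unfolding f_def disjnt_def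
        by (cases "x \<in> X closure_of T (True # s)") auto
      with x show "x \<in> \<Union>(Cantor_cover X T n)" unfolding Cantor_cover_def by blast
    qed
  qed
qed

lemma Cantor_scheme_imp_not_S1_OO:
  assumes "compact_space X" "Cantor_scheme X T"
  shows "\<not> S1_OO X"
proof
  assume "S1_OO X"
  with open_cover_Cantor_cover[OF assms(2)] obtain U
    where U: "\<And>n. U n \<in> Cantor_cover X T n" "topspace X \<subseteq> (\<Union>n. U n)"
    unfolding S1_OO_def by blast
  have F_ex: "\<exists>f. U n = topspace X - (\<Union>s\<in>{s. length s = n}. X closure_of T (f s # s))" for n
    using U(1) unfolding Cantor_cover_def by blast
  define F where "F n = (SOME f. U n = topspace X - (\<Union>s\<in>{s. length s = n}. X closure_of T (f s # s)))"
    for n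
  have F: "U n = topspace X - (\<Union>s\<in>{s. length s = n}. X closure_of T (F n s # s))" for n
    unfolding F_def by (rule someI_ex[OF F_ex])
  define p where "p = rec_nat [] (\<lambda>n s. F n s # s)"
  have p_Suc: "p (Suc n) = F n (p n) # p n" and length_p: "length (p n) = n" for n
    by (simp add: p_def) (induction n, simp_all add: p_def)
  have T_sub: "T s \<subseteq> topspace X" and T_nonempty: "T s \<noteq> {}" for s
    using assms(2) openin_subset unfolding Cantor_scheme_def by auto
  have "(\<Inter>n. X closure_of T (p n)) \<noteq> {}"
  proof (rule compact_space_imp_nest[OF assms(1)])
    fix n
    show "closedin X (X closure_of T (p n))" by simp
    show "X closure_of T (p n) \<noteq> {}" using T_sub T_nonempty by (simp add: closure_of_eq_empty)
  next
    show "decseq (\<lambda>n. X closure_of T (p n))"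
    proof (rule decseq_SucI)
      fix n
      have "X closure_of T (p (Suc n)) \<subseteq> T (p n)"
        unfolding p_Suc by (rule Cantor_scheme_closure_of_Cons_subset[OF assms(2)])
      with closure_of_subset[OF T_sub] show "X closure_of T (p (Suc n)) \<subseteq> X closure_of T (p n)"
        by (rule order_trans[rotated])
    qed
  qed
  then obtain z where z: "\<And>n. z \<in> X closure_of T (p n)" by blast
  then have "z \<in> topspace X" using closure_of_subset_topspace by fast
  with U(2) obtain n where "z \<in> U n" by blast
  then have "z \<notin> X closure_of T (p (Suc n))" by (simp add: F p_Suc length_p)
  with z show False by blast
qed

definition G1_uncoverable_points :: "'a topology \<Rightarrow> 'a set" where
  "G1_uncoverable_points X =
     {x \<in> topspace X. \<forall>N. openin X N \<and> x \<in> N \<longrightarrow> \<not> G1_coverable X N}"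

lemma G1_coverable_topspace_if_no_uncoverable_points:
  assumes "compact_space X" "G1_uncoverable_points X = {}"
  shows "G1_coverable X (topspace X)"
  using assms unfolding compact_space_def G1_uncoverable_points_def
  by (intro G1_coverable_compactin) auto

text \<open>Near an isolated point x of the uncoverable points, a closed neighbourhood is
  G1-coverable: TWO first picks a member of the cover containing x, and the compact rest
  consists of points with G1-coverable neighbourhoods.\<close>

lemma G1_uncoverable_points_dense_in_itself:
  assumes "compact_space X" "regular_space X"
  shows "G1_uncoverable_points X \<subseteq> X derived_set_of G1_uncoverable_points X"
    (is "?D \<subseteq> _")
proof
  fix x assume x: "x \<in> ?D"
  have "x \<in> topspace X" using x unfolding G1_uncoverable_points_def by blast
  moreover have "\<exists>y\<noteq>x. y \<in> ?D \<and> y \<in> W" if W: "x \<in> W" "openin X W" for W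
  proof (rule ccontr)
    assume isolated: "\<not> (\<exists>y\<noteq>x. y \<in> ?D \<and> y \<in> W)"
    obtain V where V: "openin X V" "x \<in> V" "X closure_of V \<subseteq> W"
      using regular_space_closure_of_subset_open[OF assms(2) W(2,1)] by blast
    have "G1_coverable X (X closure_of V)"
    proof (rule G1_coverable_step)
      fix C assume C: "open_cover X C"
      with \<open>x \<in> topspace X\<close> obtain U where U: "U \<in> C" "x \<in> U"
        unfolding open_cover_def by blast
      have "compactin X (X closure_of V - U)"
        using U C assms(1) unfolding open_cover_def by (intro closedin_compact_space) auto
      moreover have "\<exists>N. openin X N \<and> y \<in> N \<and> G1_coverable X N"
        if y: "y \<in> X closure_of V - U" for y
      proof -
        have "y \<in> topspace X" using y closure_of_subset_topspace by fast
        moreover have "y \<notin> ?D" using y U V isolated by auto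
        ultimately show ?thesis unfolding G1_uncoverable_points_def by blast
      qed
      ultimately have "G1_coverable X (X closure_of V - U)" by (rule G1_coverable_compactin)
      with U show "\<exists>U\<in>C. G1_coverable X (X closure_of V - U)" by blast
    qed
    then have "G1_coverable X V"
      using G1_coverable_subset closure_of_subset openin_subset V(1) by metis
    with x V show False unfolding G1_uncoverable_points_def by blast
  qed
  ultimately show "x \<in> X derived_set_of ?D" unfolding in_derived_set_of by blast
qed

lemma S1_OO_imp_G1_coverable_topspace:
  assumes "compact_space X" "Hausdorff_space X" "S1_OO X"
  shows "G1_coverable X (topspace X)"
proof (rule ccontr)
  assume "\<not> G1_coverable X (topspace X)"
  with assms(1) have "G1_uncoverable_points X \<noteq> {}"
    using G1_coverable_topspace_if_no_uncoverable_points by blast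
  moreover have regular: "regular_space X"
    using assms(1,2) compact_Hausdorff_imp_regular_space by blast
  ultimately obtain T where "Cantor_scheme X T"
    using dense_in_itself_imp_Cantor_scheme[OF assms(2)] G1_uncoverable_points_dense_in_itself
      assms(1) by blast
  with assms(1,3) show False using Cantor_scheme_imp_not_S1_OO by blast
qed

theorem lemma8p4:
  fixes X :: "'a topology"
  assumes "compact_space X" and "Hausdorff_space X"
  shows "S1_OO X \<longleftrightarrow> TWO_has_winning_strategy_G1_OO X"
proof
  assume S1: "S1_OO X"
  have "G1_coverable X (topspace X)"
    using S1_OO_imp_G1_coverable_topspace[OF assms S1] .
  then obtain \<sigma> where "TWO_covers_G1 X (topspace X) \<sigma>"
    using G1_coverable_imp_TWO_covers_G1[OF S1_OO_imp_topspace_nonempty[OF S1]] by blast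
  then show "TWO_has_winning_strategy_G1_OO X"
    unfolding TWO_has_winning_strategy_G1_OO_def TWO_winning_G1_OO_iff_TWO_covers_G1 by blast
next
  assume "TWO_has_winning_strategy_G1_OO X"
  then obtain \<sigma> where "TWO_winning_G1_OO X \<sigma>"
    unfolding TWO_has_winning_strategy_G1_OO_def ..
  then show "S1_OO X" by (rule TWO_winning_G1_OO_imp_S1_OO)
qed

end
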